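(* Let $[\gamma]\in J$ with $2\le l(M_\gamma)<p$ and $e([\gamma])=0$. Then there exists $[\gamma']\in J$ such that: (1) $l(M_{\gamma'})=l(M_\gamma)+1$; (2) $[\gamma']^{\rho^2}=[\gamma]^{\rho}$; (3) the $G$-fixed submodules coincide: $M_\gamma^G=M_{\gamma'}^G$; (4) if $l(M_\gamma)<p-1$, then $[\gamma']\in J_{p-1}$ and $e([\gamma'])=0$.
   Context: $p$ odd prime; $F$ a field containing a primitive $p$th root of unity $\xi_p$; $K=F(\sqrt[p]{a})$, $a\in F^\times$, cyclic of degree $p$; $G=\mathrm{Gal}(K/F)=\langle\sigma\rangle$ with $\sigma(\sqrt[p]{a})=\xi_p\sqrt[p]{a}$; $\rho=\sigma-1$. $J=K^\times/K^{\times p}$ as a multiplicative $\mathbb{F}_p[G]$-module with exponential action, $[\gamma]$ the class of $\gamma$; $J_i=\ker(\rho^i)$. $M_\gamma$ is the $\mathbb{F}_p[G]$-submodule generated by $[\gamma]$; its length $l(M_\gamma)$ is its $\mathbb{F}_p$-dimension, equivalently the least $i$ with $[\gamma]^{\rho^i}$ trivial. For $[\gamma]\in J_{p-1}$, the index $e([\gamma])\in\mathbb{F}_p$ is defined by $\xi_p^{e([\gamma])}=\sigma(\delta)/\delta$ where $\delta\in K$ is any $p$th root of $N_{K/F}(\gamma)$. *)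

theory Defs
  imports "HOL-Computational_Algebra.Primes"
begin

text \<open>The field K is the whole type 'k; F is a subfield of it.\<close>

definition is_subfield :: "'k::field set \<Rightarrow> bool" where
  "is_subfield S \<longleftrightarrow> 0 \<in> S \<and> 1 \<in> S \<and> (\<forall>x\<in>S. \<forall>y\<in>S. x + y \<in> S \<and> x * y \<in> S)
     \<and> (\<forall>x\<in>S. - x \<in> S \<and> inverse x \<in> S)"

definition generated_by :: "'k::field set \<Rightarrow> 'k \<Rightarrow> bool" where
  "generated_by F \<alpha> \<longleftrightarrow> (\<forall>S. is_subfield S \<and> F \<subseteq> S \<and> \<alpha> \<in> S \<longrightarrow> S = UNIV)"

definition field_aut :: "('k::field \<Rightarrow> 'k) \<Rightarrow> bool" where
  "field_aut \<sigma> \<longleftrightarrow> bij \<sigma> \<and> (\<forall>x y. \<sigma> (x + y) = \<sigma> x + \<sigma> y \<and> \<sigma> (x * y) = \<sigma> x * \<sigma> y) \<and> \<sigma> 1 = 1"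

definition kummer_setup :: "nat \<Rightarrow> 'k::field set \<Rightarrow> 'k \<Rightarrow> 'k \<Rightarrow> ('k \<Rightarrow> 'k) \<Rightarrow> bool" where
  "kummer_setup p F \<xi> \<alpha> \<sigma> \<longleftrightarrow> prime p \<and> odd p \<and> is_subfield F \<and>
     \<xi> \<in> F \<and> \<xi> ^ p = 1 \<and> \<xi> \<noteq> 1 \<and>
     \<alpha> \<noteq> 0 \<and> \<alpha> ^ p \<in> F \<and> generated_by F \<alpha> \<and>
     field_aut \<sigma> \<and> (\<forall>x\<in>F. \<sigma> x = x) \<and> \<sigma> \<alpha> = \<xi> * \<alpha>"

text \<open>Elements of J = K^x / K^{x p} are represented by nonzero gamma; a class is trivial
  iff its representative is a p-th power.\<close>
definition pth_power :: "nat \<Rightarrow> 'k::field \<Rightarrow> bool" where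
  "pth_power p x \<longleftrightarrow> (\<exists>\<beta>. \<beta> \<noteq> 0 \<and> x = \<beta> ^ p)"

definition cls :: "nat \<Rightarrow> 'k::field \<Rightarrow> 'k set" where
  "cls p \<gamma> = {\<gamma> * \<beta> ^ p | \<beta>. \<beta> \<noteq> 0}"

text \<open>Exponential action of rho = sigma - 1.\<close>
definition rho :: "('k::field \<Rightarrow> 'k) \<Rightarrow> 'k \<Rightarrow> 'k" where
  "rho \<sigma> x = \<sigma> x / x"

definition rho_pow :: "('k::field \<Rightarrow> 'k) \<Rightarrow> nat \<Rightarrow> 'k \<Rightarrow> 'k" where
  "rho_pow \<sigma> i x = (rho \<sigma> ^^ i) x"

text \<open>Length l(M_gamma): least i with [gamma]^(rho^i) trivial.\<close>
definition len :: "nat \<Rightarrow> ('k::field \<Rightarrow> 'k) \<Rightarrow> 'k \<Rightarrow> nat" where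
  "len p \<sigma> \<gamma> = (LEAST i. pth_power p (rho_pow \<sigma> i \<gamma>))"

text \<open>Membership of [gamma] in J_i = ker(rho^i).\<close>
definition inJ :: "nat \<Rightarrow> ('k::field \<Rightarrow> 'k) \<Rightarrow> nat \<Rightarrow> 'k \<Rightarrow> bool" where
  "inJ p \<sigma> i \<gamma> \<longleftrightarrow> pth_power p (rho_pow \<sigma> i \<gamma>)"

definition normK :: "nat \<Rightarrow> ('k::field \<Rightarrow> 'k) \<Rightarrow> 'k \<Rightarrow> 'k" where
  "normK p \<sigma> \<gamma> = (\<Prod>i<p. (\<sigma> ^^ i) \<gamma>)"

text \<open>Index e([gamma]) in F_p, represented by a natural number below p.\<close>
definition idx :: "nat \<Rightarrow> ('k::field \<Rightarrow> 'k) \<Rightarrow> 'k \<Rightarrow> 'k \<Rightarrow> nat" where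
  "idx p \<sigma> \<xi> \<gamma> = (SOME e. e < p \<and> (\<exists>\<delta>. \<delta> ^ p = normK p \<sigma> \<gamma> \<and> \<sigma> \<delta> = \<xi> ^ e * \<delta>))"

text \<open>The F_p[G]-submodule M_gamma generated by [gamma], as a set of classes.\<close>
definition Mgen :: "nat \<Rightarrow> ('k::field \<Rightarrow> 'k) \<Rightarrow> 'k \<Rightarrow> 'k set set" where
  "Mgen p \<sigma> \<gamma> = {cls p (\<Prod>i<p. ((\<sigma> ^^ i) \<gamma>) ^ c i) | c. True}"

definition Mfix :: "nat \<Rightarrow> ('k::field \<Rightarrow> 'k) \<Rightarrow> 'k \<Rightarrow> 'k set set" where
  "Mfix p \<sigma> \<gamma> = {X \<in> Mgen p \<sigma> \<gamma>. \<forall>x\<in>X. pth_power p (rho \<sigma> x)}"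

end

(* Since e(\<gamma>) = 0, the norm N(\<gamma>) has a \<sigma>-fixed p-th root \<delta>. Then N(\<delta>/\<gamma>) = 1, and
   Hilbert 90 gives \<gamma>' with \<rho>(\<gamma>') = \<gamma>/\<delta>; as \<delta> is fixed, \<rho>^(k+2)(\<gamma>') = \<rho>^(k+1)(\<gamma>)
   for all k. This shifts the length by one and identifies the fixed parts, because M_x^G is
   generated by the class of \<rho>^(l-1)(x), l = l(M_x). For the index write
   N(x) = \<rho>^(p-1)(x) h(x)^p. If l(M_\<gamma>) < p - 1 then \<rho>^(p-2)(\<gamma>) = c^p, and \<delta> can be taken
   to be \<rho>(c) h(\<gamma>); then c h(\<gamma>') is a \<sigma>-fixed p-th root of N(\<gamma>'), so e(\<gamma>') = 0. *)

theory Submission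
  imports Defs "HOL-Computational_Algebra.Polynomial" "HOL-Number_Theory.Cong"
begin

lemma prod_lessThan_rotate:
  fixes f :: "nat \<Rightarrow> 'a::comm_monoid_mult"
  assumes "f n = f 0"
  shows "(\<Prod>i<n. f (Suc i)) = (\<Prod>i<n. f i)"
proof (cases n)
  case (Suc m)
  have "(\<Prod>i<Suc m. f i) = f 0 * (\<Prod>i<m. f (Suc i))" by (rule prod.lessThan_Suc_shift)
  then show ?thesis using assms Suc by (simp add: mult.commute)
qed simp

lemma sum_lessThan_rotate:
  fixes f :: "nat \<Rightarrow> 'a::comm_monoid_add"
  assumes "f n = f 0"
  shows "(\<Sum>i<n. f (Suc i)) = (\<Sum>i<n. f i)"
proof (cases n)
  case (Suc m)
  have "(\<Sum>i<Suc m. f i) = f 0 + (\<Sum>i<m. f (Suc i))" by (rule sum.lessThan_Suc_shift)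
  then show ?thesis using assms Suc by (simp add: add.commute)
qed simp

section \<open>Field automorphisms\<close>

lemma field_aut_add: "field_aut f \<Longrightarrow> f (x + y) = f x + f y"
  by (simp add: field_aut_def)

lemma field_aut_mult: "field_aut f \<Longrightarrow> f (x * y) = f x * f y"
  by (simp add: field_aut_def)

lemma field_aut_one: "field_aut f \<Longrightarrow> f 1 = 1"
  by (simp add: field_aut_def)

lemma field_aut_zero: "field_aut f \<Longrightarrow> f 0 = 0"
  using field_aut_add[of f 0 0] by (metis add.right_neutral add_left_cancel)

lemma field_aut_minus: "field_aut f \<Longrightarrow> f (- x) = - f x"
  using field_aut_add[of f x "- x"] field_aut_zero[of f] by (simp add: eq_neg_iff_add_eq_0 add.commute)

lemma field_aut_eq_0_iff: "field_aut f \<Longrightarrow> f x = 0 \<longleftrightarrow> x = 0"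
  using field_aut_zero[of f] by (metis bij_is_inj field_aut_def injD)

lemma field_aut_inverse: "field_aut f \<Longrightarrow> f (inverse x) = inverse (f x)"
  using field_aut_mult[of f x "inverse x"] field_aut_one[of f] field_aut_eq_0_iff[of f x]
  by (cases "x = 0") (auto simp: field_aut_zero inverse_unique)

lemma field_aut_divide: "field_aut f \<Longrightarrow> f (x / y) = f x / f y"
  by (simp add: divide_inverse field_aut_mult field_aut_inverse)

lemma field_aut_power: "field_aut f \<Longrightarrow> f (x ^ n) = f x ^ n"
  by (induction n) (simp_all add: field_aut_one field_aut_mult)

lemma field_aut_prod: "field_aut f \<Longrightarrow> f (prod g A) = (\<Prod>i\<in>A. f (g i))"
  by (induction A rule: infinite_finite_induct) (simp_all add: field_aut_one field_aut_mult)

lemma field_aut_sum: "field_aut f \<Longrightarrow> f (sum g A) = (\<Sum>i\<in>A. f (g i))"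
  by (induction A rule: infinite_finite_induct) (simp_all add: field_aut_zero field_aut_add)

lemma field_aut_funpow:
  assumes "field_aut f"
  shows "field_aut (f ^^ n)"
proof -
  have "(f ^^ n) (x + y) = (f ^^ n) x + (f ^^ n) y \<and> (f ^^ n) (x * y) = (f ^^ n) x * (f ^^ n) y
      \<and> (f ^^ n) 1 = 1" for x y
    by (induction n) (simp_all add: assms field_aut_add field_aut_mult field_aut_one)
  then show ?thesis
    using assms by (simp add: field_aut_def)
qed

lemma is_subfield_fixed_points:
  assumes "field_aut f"
  shows "is_subfield {x. f x = x}"
  using assms
  by (simp add: is_subfield_def field_aut_zero field_aut_one field_aut_add field_aut_mult
      field_aut_minus field_aut_inverse)

section \<open>Roots of unity of prime order\<close>

locale prime_root_of_unity =
  fixes p :: nat and \<xi> :: "'k::field"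
  assumes prime: "prime p" and root: "\<xi> ^ p = 1" and nontrivial: "\<xi> \<noteq> 1"
begin

lemma p_pos: "p > 0"
  using prime by (simp add: prime_gt_0_nat)

lemma power_mod_p: "\<xi> ^ (n mod p) = \<xi> ^ n"
proof -
  have "\<xi> ^ n = (\<xi> ^ p) ^ (n div p) * \<xi> ^ (n mod p)"
    by (metis div_mult_mod_eq power_add power_mult mult.commute)
  then show ?thesis using root by simp
qed

lemma power_eq_one_imp_dvd:
  assumes "\<xi> ^ d = 1"
  shows "p dvd d"
proof (rule ccontr)
  assume "\<not> p dvd d"
  then have "coprime d p"
    using prime prime_imp_coprime coprime_commute by blast
  then obtain u where "[d * u = 1] (mod p)"
    using cong_solve_coprime_nat by auto
  then have "d * u mod p = 1"
    using prime_gt_1_nat[OF prime] by (simp add: cong_def)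
  then have "\<xi> = (\<xi> ^ d) ^ u"
    using power_mod_p[of "d * u"] by (simp add: power_mult)
  then show False
    using assms nontrivial by simp
qed

lemma power_inj:
  assumes "i < p" "j < p" "\<xi> ^ i = \<xi> ^ j"
  shows "i = j"
proof -
  have "\<xi> ^ (b - a) = 1" if "a \<le> b" "\<xi> ^ a = \<xi> ^ b" for a b
  proof -
    have "\<xi> ^ a * \<xi> ^ (b - a) = \<xi> ^ a * 1"
      using that by (metis le_add_diff_inverse mult.right_neutral power_add)
    moreover have "\<xi> \<noteq> 0"
      using root p_pos by (metis zero_neq_one zero_power)
    ultimately show ?thesis by simp
  qed
  then have "p dvd (max i j - min i j)"
    using assms(3) by (intro power_eq_one_imp_dvd) (cases "i \<le> j"; simp add: max_def min_def)
  moreover have "max i j - min i j < p"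
    using assms(1,2) by linarith
  ultimately have "max i j - min i j = 0"
    using dvd_imp_le not_le by blast
  then show ?thesis
    by linarith
qed

lemma card_powers: "card ((\<lambda>k. \<xi> ^ k) ` {..<p}) = p"
  using power_inj by (subst card_image) (auto simp: inj_on_def)

lemma root_of_unity_eq_power:
  assumes "\<zeta> ^ p = 1"
  shows "\<exists>k<p. \<zeta> = \<xi> ^ k"
proof (rule ccontr)
  assume "\<not> (\<exists>k<p. \<zeta> = \<xi> ^ k)"
  then have card: "card (insert \<zeta> ((\<lambda>k. \<xi> ^ k) ` {..<p})) = Suc p"
    using card_powers by (subst card_insert_disjoint) auto
  define Q :: "'k poly" where "Q = monom 1 p + [:-1:]"
  have deg: "degree Q = p"
    using p_pos by (simp add: Q_def degree_add_eq_left degree_monom_eq)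
  then have "Q \<noteq> 0"
    using p_pos by auto
  moreover have "poly Q (\<xi> ^ k) = 0" for k
  proof -
    have "(\<xi> ^ k) ^ p = (\<xi> ^ p) ^ k"
      by (simp flip: power_mult add: mult.commute)
    then show ?thesis
      using root by (simp add: Q_def poly_monom)
  qed
  moreover have "poly Q \<zeta> = 0"
    using assms by (simp add: Q_def poly_monom)
  ultimately have "card (insert \<zeta> ((\<lambda>k. \<xi> ^ k) ` {..<p})) \<le> card {x. poly Q x = 0}"
    by (intro card_mono poly_roots_finite) auto
  also have "\<dots> \<le> p"
    using card_poly_roots_bound[OF \<open>Q \<noteq> 0\<close>] deg by simp
  finally show False
    using card by simp
qed

lemma degree_ge_if_powers_roots:
  assumes "Q \<noteq> 0" "\<And>k. k < p \<Longrightarrow> poly Q (\<xi> ^ k) = 0"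
  shows "p \<le> degree Q"
proof -
  have "(\<lambda>k. \<xi> ^ k) ` {..<p} \<subseteq> {x. poly Q x = 0}"
    using assms(2) by auto
  then have "p \<le> card {x. poly Q x = 0}"
    using card_mono[OF poly_roots_finite[OF assms(1)]] card_powers by metis
  also have "\<dots> \<le> degree Q"
    using card_poly_roots_bound[OF assms(1)] .
  finally show ?thesis .
qed

end

lemma pth_power_nonzero: "pth_power p x \<Longrightarrow> x \<noteq> 0"
  unfolding pth_power_def by auto

lemma pth_power_pow: "b \<noteq> 0 \<Longrightarrow> pth_power p (b ^ p)"
  unfolding pth_power_def by auto

lemma pth_power_one: "pth_power p 1"
  using pth_power_pow[of 1] by simp

lemma pth_power_mult: "pth_power p x \<Longrightarrow> pth_power p y \<Longrightarrow> pth_power p (x * y)"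
  unfolding pth_power_def by (metis mult_eq_0_iff power_mult_distrib)

lemma pth_power_divide: "pth_power p x \<Longrightarrow> pth_power p y \<Longrightarrow> pth_power p (x / y)"
  unfolding pth_power_def by (metis divide_eq_0_iff power_divide)

lemma pth_power_power: "pth_power p x \<Longrightarrow> pth_power p (x ^ n)"
  by (induction n) (simp_all add: pth_power_one pth_power_mult)

lemma pth_power_prod: "(\<And>i. i \<in> A \<Longrightarrow> pth_power p (f i)) \<Longrightarrow> pth_power p (prod f A)"
  by (induction A rule: infinite_finite_induct) (simp_all add: pth_power_one pth_power_mult)

lemma pth_power_cancel: "pth_power p (x * y) \<Longrightarrow> pth_power p y \<Longrightarrow> pth_power p x"
  using pth_power_divide[of p "x * y" y] pth_power_nonzero[of p y] by simp

lemma pth_power_power_dvd: "x \<noteq> 0 \<Longrightarrow> p dvd n \<Longrightarrow> pth_power p (x ^ n)"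
  using pth_power_pow[of "x ^ (n div p)" p] by (simp flip: power_mult)

lemma pth_power_of_power_coprime:
  assumes "prime p" "x \<noteq> 0" "pth_power p (x ^ a)" "\<not> p dvd a"
  shows "pth_power p x"
proof -
  have "coprime a p"
    using assms(1,4) prime_imp_coprime coprime_commute by blast
  then obtain u v where uv: "a * u = p * v + 1"
    using bezout_nat[of a p] assms(4) by (metis coprime_imp_gcd_eq_1 dvd_0_right)
  then have "(x ^ a) ^ u = x * (x ^ v) ^ p"
    by (simp flip: power_mult add: mult.commute)
  then show ?thesis
    using pth_power_cancel pth_power_power[OF assms(3)] pth_power_pow assms(2)
    by (metis power_not_zero)
qed

lemma cls_eq_cls:
  assumes "a = b * \<beta> ^ p" "\<beta> \<noteq> 0"
  shows "cls p a = cls p b"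
proof -
  have "a * t ^ p = b * (\<beta> * t) ^ p" "b * t ^ p = a * (t / \<beta>) ^ p" for t
    using assms by (simp_all add: power_mult_distrib power_divide)
  moreover have "t \<noteq> 0 \<Longrightarrow> \<beta> * t \<noteq> 0" "t \<noteq> 0 \<Longrightarrow> t / \<beta> \<noteq> 0" for t
    using assms(2) by simp_all
  ultimately show ?thesis
    unfolding cls_def by blast
qed

lemma self_in_cls: "a \<in> cls p a"
  unfolding cls_def by (auto intro: exI[of _ 1])

section \<open>The operator \<open>\<rho> = \<sigma> - 1\<close>\<close>

locale field_automorphism =
  fixes \<sigma> :: "'k::field \<Rightarrow> 'k"
  assumes aut: "field_aut \<sigma>"
begin

lemma aut_funpow: "field_aut (\<sigma> ^^ n)"
  using field_aut_funpow[OF aut] .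

lemma sigma_eq_mult_rho: "\<sigma> x = x * rho \<sigma> x"
  by (cases "x = 0") (simp_all add: rho_def field_aut_zero[OF aut])

lemma rho_mult: "rho \<sigma> (x * y) = rho \<sigma> x * rho \<sigma> y"
  unfolding rho_def by (simp add: field_aut_mult[OF aut])

lemma rho_divide: "rho \<sigma> (x / y) = rho \<sigma> x / rho \<sigma> y"
  unfolding rho_def by (simp add: field_aut_divide[OF aut])

lemma rho_one: "rho \<sigma> 1 = 1"
  unfolding rho_def by (simp add: field_aut_one[OF aut])

lemma rho_power: "rho \<sigma> (x ^ n) = rho \<sigma> x ^ n"
  by (induction n) (simp_all add: rho_one rho_mult)

lemma rho_prod: "rho \<sigma> (prod f A) = (\<Prod>i\<in>A. rho \<sigma> (f i))"
  by (induction A rule: infinite_finite_induct) (simp_all add: rho_one rho_mult)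

lemma rho_nonzero: "x \<noteq> 0 \<Longrightarrow> rho \<sigma> x \<noteq> 0"
  unfolding rho_def by (simp add: field_aut_eq_0_iff[OF aut])

lemma rho_fixed: "\<sigma> d = d \<Longrightarrow> d \<noteq> 0 \<Longrightarrow> rho \<sigma> d = 1"
  unfolding rho_def by simp

lemma pth_power_rho: "pth_power p x \<Longrightarrow> pth_power p (rho \<sigma> x)"
  unfolding pth_power_def by (metis rho_power rho_nonzero)

lemma rho_pow_0 [simp]: "rho_pow \<sigma> 0 x = x"
  by (simp add: rho_pow_def)

lemma rho_pow_Suc: "rho_pow \<sigma> (Suc n) x = rho \<sigma> (rho_pow \<sigma> n x)"
  by (simp add: rho_pow_def)

lemma rho_pow_Suc_right: "rho_pow \<sigma> (Suc n) x = rho_pow \<sigma> n (rho \<sigma> x)"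
  by (simp add: rho_pow_def funpow_Suc_right del: funpow.simps)

lemma rho_pow_add: "rho_pow \<sigma> (m + n) x = rho_pow \<sigma> m (rho_pow \<sigma> n x)"
  by (simp add: rho_pow_def funpow_add)

lemma rho_pow_mult: "rho_pow \<sigma> n (x * y) = rho_pow \<sigma> n x * rho_pow \<sigma> n y"
  by (induction n) (simp_all add: rho_pow_Suc rho_mult)

lemma rho_pow_one: "rho_pow \<sigma> n 1 = 1"
  by (induction n) (simp_all add: rho_pow_Suc rho_one)

lemma rho_pow_divide: "rho_pow \<sigma> n (x / y) = rho_pow \<sigma> n x / rho_pow \<sigma> n y"
  by (induction n) (simp_all add: rho_pow_Suc rho_divide)

lemma rho_pow_power: "rho_pow \<sigma> n (x ^ k) = rho_pow \<sigma> n x ^ k"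
  by (induction k) (simp_all add: rho_pow_one rho_pow_mult)

lemma rho_pow_prod: "rho_pow \<sigma> n (prod f A) = (\<Prod>i\<in>A. rho_pow \<sigma> n (f i))"
  by (induction A rule: infinite_finite_induct) (simp_all add: rho_pow_one rho_pow_mult)

lemma rho_pow_nonzero: "x \<noteq> 0 \<Longrightarrow> rho_pow \<sigma> n x \<noteq> 0"
  by (induction n) (simp_all add: rho_pow_Suc rho_nonzero)

lemma pth_power_rho_pow: "pth_power p x \<Longrightarrow> pth_power p (rho_pow \<sigma> n x)"
  by (induction n) (simp_all add: rho_pow_Suc pth_power_rho)

lemma pth_power_rho_pow_mono:
  "pth_power p (rho_pow \<sigma> i x) \<Longrightarrow> i \<le> j \<Longrightarrow> pth_power p (rho_pow \<sigma> j x)"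
  using pth_power_rho_pow[of p "rho_pow \<sigma> i x" "j - i"] by (simp flip: rho_pow_add)

lemma rho_pow_fixed: "\<sigma> d = d \<Longrightarrow> d \<noteq> 0 \<Longrightarrow> rho_pow \<sigma> (Suc n) d = 1"
  by (simp add: rho_pow_Suc_right rho_fixed rho_pow_one)

text \<open>The binomial theorem for \<open>\<sigma> = 1 + \<rho>\<close>, written multiplicatively.\<close>

lemma funpow_eq_prod_rho_pow: "(\<sigma> ^^ i) x = (\<Prod>j\<le>i. rho_pow \<sigma> j x ^ (i choose j))"
proof (induction i)
  case 0
  then show ?case by simp
next
  case (Suc i)
  let ?g = "\<lambda>j. rho_pow \<sigma> j x"
  have upper: "(\<Prod>j\<le>i. ?g (Suc j) ^ (i choose Suc j)) = (\<Prod>j<i. ?g (Suc j) ^ (i choose Suc j))"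
    by (simp add: binomial_eq_0 flip: lessThan_Suc_atMost)
  have "(\<sigma> ^^ Suc i) x = (\<Prod>j\<le>i. \<sigma> (?g j) ^ (i choose j))"
    using Suc by (simp add: field_aut_prod[OF aut] field_aut_power[OF aut])
  also have "\<dots> = (\<Prod>j\<le>i. (?g j * ?g (Suc j)) ^ (i choose j))"
    by (simp only: sigma_eq_mult_rho rho_pow_Suc)
  also have "\<dots> = (\<Prod>j\<le>i. ?g j ^ (i choose j)) * (\<Prod>j\<le>i. ?g (Suc j) ^ (i choose j))"
    by (simp add: power_mult_distrib prod.distrib)
  also have "(\<Prod>j\<le>i. ?g j ^ (i choose j)) = x * (\<Prod>j\<le>i. ?g (Suc j) ^ (i choose Suc j))"
    unfolding upper by (subst lessThan_Suc_atMost[symmetric], subst prod.lessThan_Suc_shift) simp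
  also have "x * (\<Prod>j\<le>i. ?g (Suc j) ^ (i choose Suc j)) * (\<Prod>j\<le>i. ?g (Suc j) ^ (i choose j))
      = x * (\<Prod>j\<le>i. ?g (Suc j) ^ (Suc i choose Suc j))"
    by (simp add: power_add prod.distrib)
  also have "\<dots> = (\<Prod>j\<le>Suc i. ?g j ^ (Suc i choose j))"
    by (subst prod.atMost_Suc_shift) simp
  finally show ?case .
qed

lemma funpow_eq_prod_rho_pow_lessThan:
  "i < n \<Longrightarrow> (\<sigma> ^^ i) x = (\<Prod>j<n. rho_pow \<sigma> j x ^ (i choose j))"
  unfolding funpow_eq_prod_rho_pow
  by (rule prod.mono_neutral_left) (auto simp: binomial_eq_0)

lemma normK_eq_prod_rho_pow: "normK n \<sigma> x = (\<Prod>j<n. rho_pow \<sigma> j x ^ (n choose Suc j))"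
proof -
  have "normK n \<sigma> x = (\<Prod>i<n. \<Prod>j<n. rho_pow \<sigma> j x ^ (i choose j))"
    unfolding normK_def by (rule prod.cong) (simp_all add: funpow_eq_prod_rho_pow_lessThan)
  also have "\<dots> = (\<Prod>j<n. rho_pow \<sigma> j x ^ (\<Sum>i<n. i choose j))"
    by (subst prod.swap) (simp add: power_sum)
  also have "\<dots> = (\<Prod>j<n. rho_pow \<sigma> j x ^ (n choose Suc j))"
    by (cases n) (simp_all add: lessThan_Suc_atMost sum_choose_upper)
  finally show ?thesis .
qed

lemma normK_nonzero: "x \<noteq> 0 \<Longrightarrow> normK n \<sigma> x \<noteq> 0"
  unfolding normK_def by (simp add: field_aut_eq_0_iff[OF aut_funpow])

lemma normK_divide: "normK n \<sigma> (x / y) = normK n \<sigma> x / normK n \<sigma> y"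
  unfolding normK_def by (simp add: field_aut_divide[OF aut_funpow] prod_dividef)

lemma normK_fixed_point: "\<sigma> d = d \<Longrightarrow> normK n \<sigma> d = d ^ n"
proof -
  assume "\<sigma> d = d"
  then have "(\<sigma> ^^ i) d = d" for i
    by (induction i) simp_all
  then show ?thesis
    unfolding normK_def by simp
qed

lemma pth_power_rho_cls:
  assumes "pth_power p (rho \<sigma> a)" "y \<in> cls p a"
  shows "pth_power p (rho \<sigma> y)"
proof -
  obtain t where "t \<noteq> 0" "y = a * t ^ p"
    using assms(2) unfolding cls_def by blast
  then show ?thesis
    using assms(1) by (simp add: rho_mult rho_power pth_power_mult pth_power_pow rho_nonzero)
qed

lemma rho_pow_Suc_Suc_eq_of_rho_eq_divide:
  assumes "rho \<sigma> Y = \<gamma> / \<delta>" "\<sigma> \<delta> = \<delta>" "\<delta> \<noteq> 0"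
  shows "rho_pow \<sigma> (Suc (Suc k)) Y = rho_pow \<sigma> (Suc k) \<gamma>"
  using rho_pow_fixed[OF assms(2,3), of k]
  by (simp add: rho_pow_Suc_right[of "Suc k" Y] assms(1) rho_pow_divide)

end

section \<open>Cyclic Kummer extensions of degree \<open>p\<close>\<close>

locale kummer =
  fixes p :: nat and F :: "'k::field set" and \<xi> \<alpha> :: 'k and \<sigma> :: "'k \<Rightarrow> 'k"
  assumes kummer_setup: "kummer_setup p F \<xi> \<alpha> \<sigma>"

sublocale kummer \<subseteq> field_automorphism \<sigma>
  using kummer_setup by unfold_locales (simp add: kummer_setup_def)

sublocale kummer \<subseteq> prime_root_of_unity p \<xi>
  using kummer_setup by unfold_locales (simp_all add: kummer_setup_def)

context kummer
begin

lemma p_ge_3: "3 \<le> p"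
proof -
  have "2 \<le> p" "odd p"
    using kummer_setup prime_ge_2_nat by (auto simp: kummer_setup_def)
  then show ?thesis
    by (cases "p = 2") auto
qed

lemma sigma_xi_power: "\<sigma> (\<xi> ^ k) = \<xi> ^ k"
  using kummer_setup by (simp add: kummer_setup_def field_aut_power[OF aut])

lemma funpow_sigma_alpha: "(\<sigma> ^^ i) \<alpha> = \<xi> ^ i * \<alpha>"
  using kummer_setup
  by (induction i) (simp_all add: kummer_setup_def field_aut_mult[OF aut] sigma_xi_power)

lemma funpow_sigma_p: "(\<sigma> ^^ p) x = x"
proof -
  let ?S = "{x. (\<sigma> ^^ p) x = x}"
  have "F \<subseteq> ?S"
  proof
    fix y assume "y \<in> F"
    then have "(\<sigma> ^^ i) y = y" for i
      using kummer_setup by (induction i) (simp_all add: kummer_setup_def)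
    then show "y \<in> ?S" by simp
  qed
  moreover have "\<alpha> \<in> ?S"
    using funpow_sigma_alpha root by simp
  ultimately have "?S = UNIV"
    using kummer_setup is_subfield_fixed_points[OF aut_funpow]
    by (simp add: kummer_setup_def generated_by_def)
  then show ?thesis by blast
qed

lemma sigma_normK: "\<sigma> (normK p \<sigma> x) = normK p \<sigma> x"
  unfolding normK_def field_aut_prod[OF aut]
  using prod_lessThan_rotate[of "\<lambda>i. (\<sigma> ^^ i) x" p] funpow_sigma_p by simp

text \<open>Since \<open>p\<close> divides \<open>p choose Suc j\<close> for \<open>j < p - 1\<close>, all factors but the last one of
  \<open>normK_eq_prod_rho_pow\<close> are \<open>p\<close>-th powers.\<close>

definition norm_cofactor :: "'k \<Rightarrow> 'k" where
  "norm_cofactor x = (\<Prod>j<p - 1. rho_pow \<sigma> j x ^ ((p choose Suc j) div p))"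

lemma normK_eq_rho_pow_mult_cofactor:
  "normK p \<sigma> x = rho_pow \<sigma> (p - 1) x * norm_cofactor x ^ p"
proof -
  have "rho_pow \<sigma> j x ^ (p choose Suc j) = (rho_pow \<sigma> j x ^ ((p choose Suc j) div p)) ^ p"
    if "j < p - 1" for j
  proof -
    have "p dvd (p choose Suc j)"
      using that prime by (intro dvd_choose_prime) auto
    then show ?thesis
      by (simp flip: power_mult)
  qed
  then have "(\<Prod>j<p - 1. rho_pow \<sigma> j x ^ (p choose Suc j)) = norm_cofactor x ^ p"
    unfolding norm_cofactor_def prod_power_distrib by (intro prod.cong) simp_all
  moreover obtain m where "p = Suc m"
    using p_pos by (cases p) auto
  ultimately show ?thesis
    using normK_eq_prod_rho_pow[of p x]
    by (simp only: prod.lessThan_Suc binomial_n_n power_one_right diff_Suc_1 mult.commute)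
qed

lemma norm_cofactor_nonzero: "x \<noteq> 0 \<Longrightarrow> norm_cofactor x \<noteq> 0"
  by (simp add: norm_cofactor_def rho_pow_nonzero)

lemma norm_cofactor_rho: "norm_cofactor (rho \<sigma> x) = rho \<sigma> (norm_cofactor x)"
  by (simp add: norm_cofactor_def rho_prod rho_power flip: rho_pow_Suc rho_pow_Suc_right)

lemma norm_cofactor_divide_fixed:
  assumes "\<sigma> d = d" "d \<noteq> 0"
  shows "norm_cofactor (x / d) = norm_cofactor x / d"
proof -
  obtain m where m: "p - 1 = Suc m"
    using p_ge_3 by (cases "p - 1") auto
  have "(\<Prod>j<p - 1. rho_pow \<sigma> j d ^ ((p choose Suc j) div p)) = d"
    unfolding m prod.lessThan_Suc_shift using p_pos assms by (simp add: rho_pow_fixed)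
  then show ?thesis
    by (simp add: norm_cofactor_def rho_pow_divide power_divide prod_dividef)
qed

lemma pth_power_rho_pow_p:
  assumes "x \<noteq> 0"
  shows "pth_power p (rho_pow \<sigma> p x)"
proof -
  have "rho_pow \<sigma> (p - 1) x = normK p \<sigma> x / norm_cofactor x ^ p"
    using normK_eq_rho_pow_mult_cofactor[of x] norm_cofactor_nonzero[OF assms] by simp
  then have "rho_pow \<sigma> p x = rho \<sigma> (normK p \<sigma> x) / rho \<sigma> (norm_cofactor x) ^ p"
    using p_pos rho_pow_Suc[of "p - 1" x] by (simp add: rho_divide rho_power)
  also have "rho \<sigma> (normK p \<sigma> x) = 1"
    using rho_fixed[OF sigma_normK normK_nonzero[OF assms]] .
  finally show ?thesis
    using pth_power_divide[OF pth_power_one pth_power_pow] rho_nonzero norm_cofactor_nonzero assms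
    by metis
qed

lemma pth_power_rho_pow_len: "x \<noteq> 0 \<Longrightarrow> pth_power p (rho_pow \<sigma> (len p \<sigma> x) x)"
  unfolding len_def using pth_power_rho_pow_p by (rule LeastI)

lemma len_le_p: "x \<noteq> 0 \<Longrightarrow> len p \<sigma> x \<le> p"
  unfolding len_def using pth_power_rho_pow_p by (rule Least_le)

lemma pth_power_rho_pow_iff:
  "x \<noteq> 0 \<Longrightarrow> pth_power p (rho_pow \<sigma> i x) \<longleftrightarrow> len p \<sigma> x \<le> i"
  using pth_power_rho_pow_mono[OF pth_power_rho_pow_len] not_less_Least[of i]
  unfolding len_def by (metis not_le)

lemma len_eqI: "(\<And>i. pth_power p (rho_pow \<sigma> i x) \<longleftrightarrow> l \<le> i) \<Longrightarrow> len p \<sigma> x = l"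
  unfolding len_def by (rule Least_equality) auto

lemma root_of_normK_nonzero: "\<delta> ^ p = normK p \<sigma> x \<Longrightarrow> x \<noteq> 0 \<Longrightarrow> \<delta> \<noteq> 0"
  using normK_nonzero p_pos by (metis zero_power)

lemma pth_powers_eq_imp_root_of_unity_mult:
  assumes "d ^ p = \<delta> ^ p" "\<delta> \<noteq> 0"
  obtains k where "k < p" "d = \<xi> ^ k * \<delta>"
proof -
  have "(d / \<delta>) ^ p = 1"
    using assms by (simp add: power_divide)
  then obtain k where "k < p" "d / \<delta> = \<xi> ^ k"
    using root_of_unity_eq_power by blast
  then show ?thesis
    using that assms(2) by (simp add: field_simps)
qed

lemma fixed_if_pth_power_eq_fixed:
  assumes "\<sigma> \<delta> = \<delta>" "\<delta> \<noteq> 0" "d ^ p = \<delta> ^ p"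
  shows "\<sigma> d = d"
  using pth_powers_eq_imp_root_of_unity_mult[OF assms(3,2)] assms(1)
  by (metis field_aut_mult[OF aut] sigma_xi_power)

lemma idx_eqI:
  assumes "x \<noteq> 0" "e < p" "\<delta> ^ p = normK p \<sigma> x" "\<sigma> \<delta> = \<xi> ^ e * \<delta>"
  shows "idx p \<sigma> \<xi> x = e"
proof -
  let ?e = "idx p \<sigma> \<xi> x"
  have "?e < p \<and> (\<exists>d. d ^ p = normK p \<sigma> x \<and> \<sigma> d = \<xi> ^ ?e * d)"
    unfolding idx_def by (rule someI[of _ e]) (use assms in blast)
  then obtain d where d: "?e < p" "d ^ p = \<delta> ^ p" "\<sigma> d = \<xi> ^ ?e * d"
    using assms(3) by auto
  have "\<delta> \<noteq> 0"
    using root_of_normK_nonzero assms(1,3) by blast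
  then obtain k where k: "d = \<xi> ^ k * \<delta>"
    using pth_powers_eq_imp_root_of_unity_mult[OF d(2)] by blast
  have "\<sigma> d = \<xi> ^ e * d"
    unfolding k by (simp add: field_aut_mult[OF aut] sigma_xi_power assms(4) mult.left_commute)
  then have "\<xi> ^ ?e * d = \<xi> ^ e * d"
    using d(3) by simp
  moreover have "d \<noteq> 0"
    using d(2) \<open>\<delta> \<noteq> 0\<close> p_pos by (metis zero_power power_not_zero)
  ultimately have "\<xi> ^ ?e = \<xi> ^ e"
    by simp
  then show ?thesis
    using power_inj[OF d(1) assms(2)] by blast
qed

lemma exists_fixed_root_of_normK:
  assumes "x \<noteq> 0" "pth_power p (rho_pow \<sigma> (p - 1) x)" "idx p \<sigma> \<xi> x = 0"
  obtains \<delta> where "\<delta> ^ p = normK p \<sigma> x" "\<sigma> \<delta> = \<delta>"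
proof -
  obtain b where b: "b \<noteq> 0" "rho_pow \<sigma> (p - 1) x = b ^ p"
    using assms(2) unfolding pth_power_def by blast
  define d where "d = b * norm_cofactor x"
  have d: "d ^ p = normK p \<sigma> x"
    unfolding d_def power_mult_distrib b(2)[symmetric] normK_eq_rho_pow_mult_cofactor ..
  have "d \<noteq> 0"
    using b(1) norm_cofactor_nonzero[OF assms(1)] by (simp add: d_def)
  moreover have "\<sigma> d ^ p = d ^ p"
    using sigma_normK[of x] by (simp add: d field_aut_power[OF aut, symmetric])
  ultimately obtain k where k: "k < p" "\<sigma> d = \<xi> ^ k * d"
    using pth_powers_eq_imp_root_of_unity_mult by metis
  then have "k = 0"
    using idx_eqI[OF assms(1) k(1) d k(2)] assms(3) by simp
  then have "\<sigma> d = d"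
    using k(2) by simp
  then show ?thesis
    using that d by blast
qed

text \<open>Dedekind's independence of the characters \<open>\<sigma>\<^sup>k\<close>, tested on the powers of \<open>\<alpha>\<close>.\<close>

lemma sum_funpow_sigma_nonzero:
  assumes "c 0 \<noteq> 0"
  obtains \<theta> where "(\<Sum>k<p. c k * (\<sigma> ^^ k) \<theta>) \<noteq> 0"
proof (rule ccontr)
  assume "\<not> thesis"
  then have vanish: "(\<Sum>k<p. c k * (\<sigma> ^^ k) \<theta>) = 0" for \<theta>
    using that by blast
  define Q where "Q = (\<Sum>k<p. monom (c k) k)"
  have "poly Q (\<xi> ^ j) = 0" for j
  proof -
    have "(\<Sum>k<p. c k * (\<sigma> ^^ k) (\<alpha> ^ j)) = poly Q (\<xi> ^ j) * \<alpha> ^ j"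
      by (simp add: Q_def poly_sum poly_monom sum_distrib_left field_aut_power[OF aut_funpow]
          funpow_sigma_alpha power_mult_distrib ac_simps flip: power_mult)
    then show ?thesis
      using vanish kummer_setup by (simp add: kummer_setup_def)
  qed
  moreover have "Q \<noteq> 0"
  proof -
    have "coeff Q 0 = c 0"
      using p_pos by (simp add: Q_def coeff_sum)
    then show ?thesis
      using assms by auto
  qed
  moreover have "degree Q \<le> p - 1"
    unfolding Q_def by (intro degree_sum_le) (auto intro!: order.trans[OF degree_monom_le])
  ultimately have "p \<le> p - 1"
    using degree_ge_if_powers_roots[of Q] by (blast intro: order.trans)
  then show False
    using p_pos by simp
qed

lemma hilbert90:
  assumes "normK p \<sigma> u = 1"
  obtains Y where "Y \<noteq> 0" "rho \<sigma> Y = u"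
proof -
  have "normK p \<sigma> 0 = 0"
    using p_pos by (simp add: normK_def field_aut_zero[OF aut_funpow])
  then have "u \<noteq> 0"
    using assms by auto
  define v where "v = inverse u"
  define c where "c k = (\<Prod>i<k. (\<sigma> ^^ i) v)" for k
  have c_Suc: "v * \<sigma> (c k) = c (Suc k)" for k
    by (simp add: c_def field_aut_prod[OF aut] prod.lessThan_Suc_shift del: prod.lessThan_Suc)
  have c_p: "c p = c 0"
    using assms prod_inversef[of "\<lambda>i. (\<sigma> ^^ i) u" "{..<p}"]
    by (simp add: c_def v_def normK_def field_aut_inverse[OF aut_funpow] comp_def)
  have "c 0 \<noteq> 0"
    by (simp add: c_def)
  then obtain \<theta> where \<theta>: "(\<Sum>k<p. c k * (\<sigma> ^^ k) \<theta>) \<noteq> 0"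
    by (rule sum_funpow_sigma_nonzero)
  define Y where "Y = (\<Sum>k<p. c k * (\<sigma> ^^ k) \<theta>)"
  have "Y \<noteq> 0"
    using \<theta> by (simp add: Y_def)
  have "v * \<sigma> Y = (\<Sum>k<p. v * \<sigma> (c k) * (\<sigma> ^^ Suc k) \<theta>)"
    by (simp add: Y_def field_aut_sum[OF aut] field_aut_mult[OF aut] sum_distrib_left mult.assoc)
  also have "\<dots> = (\<Sum>k<p. c (Suc k) * (\<sigma> ^^ Suc k) \<theta>)"
    by (simp only: c_Suc)
  also have "\<dots> = Y"
    unfolding Y_def using c_p funpow_sigma_p
    by (intro sum_lessThan_rotate[of "\<lambda>k. c k * (\<sigma> ^^ k) \<theta>"]) simp
  finally have "\<sigma> Y = u * Y"
    using \<open>u \<noteq> 0\<close> by (simp add: v_def field_simps)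
  then show ?thesis
    using that \<open>Y \<noteq> 0\<close> by (simp add: rho_def)
qed

section \<open>The fixed part of \<open>M\<^sub>x\<close>\<close>

definition orbit_prod :: "'k \<Rightarrow> (nat \<Rightarrow> nat) \<Rightarrow> 'k" where
  "orbit_prod x c = (\<Prod>i<p. ((\<sigma> ^^ i) x) ^ c i)"

lemma Mgen_eq: "Mgen p \<sigma> x = {cls p (orbit_prod x c) | c. True}"
  by (simp add: Mgen_def orbit_prod_def)

lemma orbit_prod_mult: "orbit_prod x c * orbit_prod x d = orbit_prod x (\<lambda>i. c i + d i)"
  by (simp add: orbit_prod_def power_add prod.distrib)

lemma orbit_prod_power: "orbit_prod x c ^ n = orbit_prod x (\<lambda>i. c i * n)"
  by (simp add: orbit_prod_def power_mult prod_power_distrib)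

lemma sigma_orbit_prod:
  "\<sigma> (orbit_prod x c) = orbit_prod x (\<lambda>i. if i = 0 then c (p - 1) else c (i - 1))"
proof -
  let ?f = "\<lambda>i. ((\<sigma> ^^ i) x) ^ (if i = 0 then c (p - 1) else c (i - 1))"
  have "\<sigma> (orbit_prod x c) = (\<Prod>i<p. ?f (Suc i))"
    by (simp add: orbit_prod_def field_aut_prod[OF aut] field_aut_power[OF aut])
  also have "\<dots> = (\<Prod>i<p. ?f i)"
    using p_pos by (intro prod_lessThan_rotate) (simp add: funpow_sigma_p)
  finally show ?thesis
    by (simp add: orbit_prod_def)
qed

lemma orbit_prod_unit: "orbit_prod x (\<lambda>i. if i = 0 then 1 else 0) = x"
proof -
  have "orbit_prod x (\<lambda>i. if i = 0 then 1 else 0) = (\<Prod>i\<in>{0}. ((\<sigma> ^^ i) x) ^ (if i = 0 then 1 else 0))"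
    unfolding orbit_prod_def using p_pos by (intro prod.mono_neutral_right) auto
  then show ?thesis
    by simp
qed

lemma orbit_prod_eq_prod_rho_pow:
  "orbit_prod x c = (\<Prod>j<p. rho_pow \<sigma> j x ^ (\<Sum>i<p. (i choose j) * c i))"
proof -
  have "orbit_prod x c = (\<Prod>i<p. \<Prod>j<p. rho_pow \<sigma> j x ^ ((i choose j) * c i))"
    unfolding orbit_prod_def
    by (intro prod.cong) (simp_all add: funpow_eq_prod_rho_pow_lessThan power_mult prod_power_distrib)
  then show ?thesis
    by (subst (asm) prod.swap) (simp add: power_sum)
qed

text \<open>\<open>\<sigma> y * y ^ (p - 1) = \<rho> y * y ^ p\<close> realises \<open>\<rho>\<close> on \<open>M\<^sub>x\<close> with natural exponents.\<close>

lemma exists_orbit_prod_rho_pow: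
  assumes "x \<noteq> 0"
  shows "\<exists>c b. b \<noteq> 0 \<and> orbit_prod x c = rho_pow \<sigma> n x * b ^ p"
proof (induction n)
  case 0
  have "orbit_prod x (\<lambda>i. if i = 0 then 1 else 0) = rho_pow \<sigma> 0 x * 1 ^ p"
    using orbit_prod_unit by simp
  then show ?case
    using one_neq_zero by blast
next
  case (Suc n)
  then obtain c b where b: "b \<noteq> 0" and y: "orbit_prod x c = rho_pow \<sigma> n x * b ^ p"
    by blast
  define y where "y = orbit_prod x c"
  have "y \<noteq> 0"
    using y b rho_pow_nonzero[OF assms] by (simp add: y_def)
  have "\<sigma> y * y ^ (p - 1) = rho \<sigma> y * y ^ p"
    using \<open>y \<noteq> 0\<close> p_pos by (simp add: rho_def power_eq_if)
  also have "\<dots> = rho_pow \<sigma> (Suc n) x * (rho \<sigma> b * y) ^ p"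
    by (simp add: y[folded y_def] rho_mult rho_power rho_pow_Suc power_mult_distrib)
  finally have "rho_pow \<sigma> (Suc n) x * (rho \<sigma> b * y) ^ p
      = orbit_prod x (\<lambda>i. (if i = 0 then c (p - 1) else c (i - 1)) + c i * (p - 1))"
    by (simp add: y_def sigma_orbit_prod orbit_prod_power orbit_prod_mult)
  moreover have "rho \<sigma> b * y \<noteq> 0"
    using rho_nonzero[OF b] \<open>y \<noteq> 0\<close> by simp
  ultimately show ?case
    by metis
qed

lemma cls_rho_pow_power_in_Mgen:
  assumes "x \<noteq> 0"
  shows "cls p (rho_pow \<sigma> n x ^ k) \<in> Mgen p \<sigma> x"
proof -
  obtain c b where "b \<noteq> 0" and c: "orbit_prod x c = rho_pow \<sigma> n x * b ^ p"
    using exists_orbit_prod_rho_pow[OF assms] by blast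
  have "(b ^ p) ^ k = (b ^ k) ^ p"
    by (simp flip: power_mult add: mult.commute)
  then have "orbit_prod x (\<lambda>i. c i * k) = rho_pow \<sigma> n x ^ k * (b ^ k) ^ p"
    unfolding orbit_prod_power[symmetric] c power_mult_distrib by simp
  then have "cls p (orbit_prod x (\<lambda>i. c i * k)) = cls p (rho_pow \<sigma> n x ^ k)"
    using \<open>b \<noteq> 0\<close> by (intro cls_eq_cls[where \<beta> = "b ^ k"]) simp_all
  then show ?thesis
    unfolding Mgen_eq by blast
qed

lemma prod_rho_pow_eq_single_mod_pth_power:
  assumes "x \<noteq> 0" "j < p" "len p \<sigma> x \<le> Suc (m + j)" "\<And>i. i < j \<Longrightarrow> p dvd a i"
  obtains \<beta> where "\<beta> \<noteq> 0"
    "(\<Prod>i<p. rho_pow \<sigma> (m + i) x ^ a i) = rho_pow \<sigma> (m + j) x ^ a j * \<beta> ^ p"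
proof -
  have "pth_power p (\<Prod>i\<in>{..<p} - {j}. rho_pow \<sigma> (m + i) x ^ a i)"
  proof (rule pth_power_prod)
    fix i
    assume "i \<in> {..<p} - {j}"
    then consider "i < j" | "j < i"
      by fastforce
    then show "pth_power p (rho_pow \<sigma> (m + i) x ^ a i)"
    proof cases
      case 1
      then show ?thesis
        using assms(4) by (simp add: pth_power_power_dvd rho_pow_nonzero[OF assms(1)])
    next
      case 2
      then show ?thesis
        using assms(1,3) by (simp add: pth_power_power pth_power_rho_pow_iff)
    qed
  qed
  then obtain \<beta> where "\<beta> \<noteq> 0" "(\<Prod>i\<in>{..<p} - {j}. rho_pow \<sigma> (m + i) x ^ a i) = \<beta> ^ p"
    unfolding pth_power_def by blast
  moreover have "(\<Prod>i<p. rho_pow \<sigma> (m + i) x ^ a i)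
      = rho_pow \<sigma> (m + j) x ^ a j * (\<Prod>i\<in>{..<p} - {j}. rho_pow \<sigma> (m + i) x ^ a i)"
    using assms(2) by (simp add: prod.remove)
  ultimately show ?thesis
    using that by metis
qed

text \<open>Applying \<open>\<rho>\<^sup>m\<close> for a suitable \<open>m\<close> isolates the first exponent not divisible by \<open>p\<close>
  at position \<open>len - 1\<close>, where it would make \<open>\<rho>\<^bsup>len - 1\<^esup> x\<close> a \<open>p\<close>-th power.\<close>

lemma dvd_exponent_if_pth_power_rho:
  assumes "x \<noteq> 0" "pth_power p (rho \<sigma> (\<Prod>i<p. rho_pow \<sigma> i x ^ a i))" "Suc j < len p \<sigma> x"
  shows "p dvd a j"
  using assms(3)
proof (induction j rule: less_induct)
  case (less j)
  define m where "m = len p \<sigma> x - Suc j"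
  have "j < p"
    using less.prems len_le_p[OF assms(1)] by simp
  have "len p \<sigma> x \<le> Suc (m + j)"
    using less.prems by (simp add: m_def)
  moreover have "p dvd a i" if "i < j" for i
    using less.IH that less.prems by simp
  ultimately obtain \<beta> where "\<beta> \<noteq> 0"
    and \<beta>: "(\<Prod>i<p. rho_pow \<sigma> (m + i) x ^ a i) = rho_pow \<sigma> (m + j) x ^ a j * \<beta> ^ p"
    using prod_rho_pow_eq_single_mod_pth_power[OF assms(1) \<open>j < p\<close>] by blast
  have "pth_power p (rho_pow \<sigma> m (\<Prod>i<p. rho_pow \<sigma> i x ^ a i))"
    using pth_power_rho_pow_mono[of p 1] assms(2) less.prems by (simp add: m_def rho_pow_Suc)
  also have "rho_pow \<sigma> m (\<Prod>i<p. rho_pow \<sigma> i x ^ a i) = (\<Prod>i<p. rho_pow \<sigma> (m + i) x ^ a i)"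
    by (simp add: rho_pow_prod rho_pow_power flip: rho_pow_add)
  finally have "pth_power p (rho_pow \<sigma> (m + j) x ^ a j)"
    unfolding \<beta> using pth_power_cancel pth_power_pow[OF \<open>\<beta> \<noteq> 0\<close>] by blast
  moreover have "m + j = len p \<sigma> x - 1"
    using less.prems by (simp add: m_def)
  ultimately have last: "pth_power p (rho_pow \<sigma> (len p \<sigma> x - 1) x ^ a j)"
    by simp
  show ?case
  proof (rule ccontr)
    assume "\<not> p dvd a j"
    then have "pth_power p (rho_pow \<sigma> (len p \<sigma> x - 1) x)"
      using pth_power_of_power_coprime prime rho_pow_nonzero[OF assms(1)] last by blast
    then show False
      using less.prems by (simp add: pth_power_rho_pow_iff[OF assms(1)])
  qed
qed

lemma orbit_prod_eq_rho_pow_len_mod_pth_power: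
  assumes "x \<noteq> 0" "1 \<le> len p \<sigma> x" "pth_power p (rho \<sigma> (orbit_prod x c))"
  obtains k \<beta> where "orbit_prod x c = rho_pow \<sigma> (len p \<sigma> x - 1) x ^ k * \<beta> ^ p" "\<beta> \<noteq> 0"
proof -
  let ?l = "len p \<sigma> x"
  define a where "a j = (\<Sum>k<p. (k choose j) * c k)" for j
  have P: "pth_power p (rho \<sigma> (\<Prod>i<p. rho_pow \<sigma> i x ^ a i))"
    using assms(3) by (simp only: orbit_prod_eq_prod_rho_pow a_def)
  have "?l - 1 < p"
    using assms len_le_p by (simp add: less_eq_Suc_le)
  moreover have "?l \<le> Suc (0 + (?l - 1))"
    by simp
  moreover have "p dvd a i" if "i < ?l - 1" for i
    using dvd_exponent_if_pth_power_rho[OF assms(1) P] that by simp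
  ultimately obtain \<beta> where "\<beta> \<noteq> 0"
    "(\<Prod>i<p. rho_pow \<sigma> (0 + i) x ^ a i) = rho_pow \<sigma> (0 + (?l - 1)) x ^ a (?l - 1) * \<beta> ^ p"
    using prod_rho_pow_eq_single_mod_pth_power[OF assms(1)] by blast
  then show ?thesis
    using that by (simp add: orbit_prod_eq_prod_rho_pow a_def)
qed

lemma Mfix_eq_cls_rho_pow_len:
  assumes "x \<noteq> 0" "1 \<le> len p \<sigma> x"
  shows "Mfix p \<sigma> x = {cls p (rho_pow \<sigma> (len p \<sigma> x - 1) x ^ k) | k. True}"
proof (intro set_eqI iffI)
  let ?w = "rho_pow \<sigma> (len p \<sigma> x - 1) x"
  fix X
  {
    assume "X \<in> Mfix p \<sigma> x"
    then obtain c where X: "X = cls p (orbit_prod x c)" and "\<forall>y\<in>X. pth_power p (rho \<sigma> y)"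
      unfolding Mfix_def Mgen_eq by blast
    then have "pth_power p (rho \<sigma> (orbit_prod x c))"
      using self_in_cls by blast
    then obtain k \<beta> where "orbit_prod x c = ?w ^ k * \<beta> ^ p" "\<beta> \<noteq> 0"
      by (rule orbit_prod_eq_rho_pow_len_mod_pth_power[OF assms])
    then have "X = cls p (?w ^ k)"
      unfolding X by (rule cls_eq_cls)
    then show "X \<in> {cls p (?w ^ k) | k. True}"
      by blast
  next
    assume "X \<in> {cls p (?w ^ k) | k. True}"
    then obtain k where X: "X = cls p (?w ^ k)"
      by blast
    have "rho \<sigma> (?w ^ k) = rho_pow \<sigma> (len p \<sigma> x) x ^ k"
      using assms(2) rho_pow_Suc[of "len p \<sigma> x - 1" x] by (simp add: rho_power)
    then have "pth_power p (rho \<sigma> (?w ^ k))"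
      using pth_power_rho_pow_len[OF assms(1)] by (simp add: pth_power_power)
    then show "X \<in> Mfix p \<sigma> x"
      unfolding Mfix_def X using cls_rho_pow_power_in_Mgen[OF assms(1)] pth_power_rho_cls by blast
  }
qed

section \<open>Lifting \<open>\<gamma>\<close>\<close>

lemma len_eq_Suc_of_rho_pow_shift:
  assumes "\<gamma> \<noteq> 0" "2 \<le> len p \<sigma> \<gamma>"
    and shift: "\<And>k. rho_pow \<sigma> (Suc (Suc k)) Y = rho_pow \<sigma> (Suc k) \<gamma>"
  shows "len p \<sigma> Y = len p \<sigma> \<gamma> + 1"
proof (rule len_eqI)
  fix i
  show "pth_power p (rho_pow \<sigma> i Y) \<longleftrightarrow> len p \<sigma> \<gamma> + 1 \<le> i"
  proof (cases "2 \<le> i")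
    case True
    then obtain k where "i = Suc (Suc k)"
      using add_2_eq_Suc le_Suc_ex by blast
    then show ?thesis
      using shift pth_power_rho_pow_iff[OF assms(1)] by simp
  next
    case False
    have "\<not> pth_power p (rho_pow \<sigma> 2 Y)"
      using shift[of 0] assms by (simp add: numeral_2_eq_2 pth_power_rho_pow_iff)
    then show ?thesis
      using False assms(2) pth_power_rho_pow_mono[of p i Y 2] by auto
  qed
qed

lemma Mfix_eq_of_rho_pow_shift:
  assumes "\<gamma> \<noteq> 0" "Y \<noteq> 0" "2 \<le> len p \<sigma> \<gamma>"
    and shift: "\<And>k. rho_pow \<sigma> (Suc (Suc k)) Y = rho_pow \<sigma> (Suc k) \<gamma>"
  shows "Mfix p \<sigma> \<gamma> = Mfix p \<sigma> Y"
proof -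
  have "rho_pow \<sigma> (len p \<sigma> \<gamma>) Y = rho_pow \<sigma> (len p \<sigma> \<gamma> - 1) \<gamma>"
    using shift[of "len p \<sigma> \<gamma> - 2"] assms(3) by (simp add: Suc_diff_Suc numeral_2_eq_2)
  then show ?thesis
    using Mfix_eq_cls_rho_pow_len[OF assms(1)] Mfix_eq_cls_rho_pow_len[OF assms(2)]
      len_eq_Suc_of_rho_pow_shift[OF assms(1,3) shift] assms(3)
    by simp
qed

lemma exists_fixed_root_of_normK_via_rho:
  assumes "\<gamma> \<noteq> 0" "len p \<sigma> \<gamma> < p" "idx p \<sigma> \<xi> \<gamma> = 0"
  obtains \<delta> where "\<delta> ^ p = normK p \<sigma> \<gamma>" "\<sigma> \<delta> = \<delta>"
    "len p \<sigma> \<gamma> < p - 1 \<Longrightarrow>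
       \<exists>c. c ^ p = rho_pow \<sigma> (p - 2) \<gamma> \<and> \<delta> = rho \<sigma> c * norm_cofactor \<gamma>"
proof -
  have "pth_power p (rho_pow \<sigma> (p - 1) \<gamma>)"
    using assms(1,2) by (simp add: pth_power_rho_pow_iff)
  then obtain \<delta>' where \<delta>': "\<delta>' ^ p = normK p \<sigma> \<gamma>" "\<sigma> \<delta>' = \<delta>'"
    by (rule exists_fixed_root_of_normK[OF assms(1) _ assms(3)])
  show ?thesis
  proof (cases "len p \<sigma> \<gamma> < p - 1")
    case True
    then have "pth_power p (rho_pow \<sigma> (p - 2) \<gamma>)"
      using assms(1) by (simp add: pth_power_rho_pow_iff)
    then obtain c where c: "c ^ p = rho_pow \<sigma> (p - 2) \<gamma>"
      unfolding pth_power_def by metis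
    define \<delta> where "\<delta> = rho \<sigma> c * norm_cofactor \<gamma>"
    have "p - 1 = Suc (p - 2)"
      using p_ge_3 by simp
    then have "rho \<sigma> c ^ p = rho_pow \<sigma> (p - 1) \<gamma>"
      by (metis rho_pow_Suc rho_power c)
    then have "\<delta> ^ p = normK p \<sigma> \<gamma>"
      by (simp add: \<delta>_def power_mult_distrib normK_eq_rho_pow_mult_cofactor)
    moreover have "\<sigma> \<delta> = \<delta>"
      using fixed_if_pth_power_eq_fixed[OF \<delta>'(2)] root_of_normK_nonzero \<delta>' assms(1) calculation
      by metis
    ultimately show ?thesis
      using that c \<delta>_def by blast
  next
    case False
    then show ?thesis
      using that \<delta>' by blast
  qed
qed

lemma idx_eq_0_of_rho_eq_divide:
  assumes "Y \<noteq> 0" "rho \<sigma> Y = \<gamma> / \<delta>" "\<sigma> \<delta> = \<delta>" "\<delta> \<noteq> 0"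
    and "c ^ p = rho_pow \<sigma> (p - 2) \<gamma>" "\<delta> = rho \<sigma> c * norm_cofactor \<gamma>"
  shows "idx p \<sigma> \<xi> Y = 0"
proof -
  define d where "d = c * norm_cofactor Y"
  have "p - 1 = Suc (Suc (p - 3))" "p - 2 = Suc (p - 3)"
    using p_ge_3 by simp_all
  then have "rho_pow \<sigma> (p - 1) Y = rho_pow \<sigma> (p - 2) \<gamma>"
    using rho_pow_Suc_Suc_eq_of_rho_eq_divide[OF assms(2-4)] by simp
  then have d_root: "d ^ p = normK p \<sigma> Y"
    using assms(5) by (simp add: d_def power_mult_distrib normK_eq_rho_pow_mult_cofactor)
  have "rho \<sigma> d = rho \<sigma> c * norm_cofactor (\<gamma> / \<delta>)"
    by (simp add: d_def rho_mult assms(2) flip: norm_cofactor_rho)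
  also have "\<dots> = 1"
    unfolding norm_cofactor_divide_fixed[OF assms(3,4)] using assms(4,6) by simp
  finally have "\<sigma> d = \<xi> ^ 0 * d"
    using sigma_eq_mult_rho[of d] by simp
  then show ?thesis
    by (rule idx_eqI[OF assms(1) p_pos d_root])
qed

end

theorem lemma6:
  fixes F :: "'k::field set" and \<xi> \<alpha> \<gamma> :: 'k and \<sigma> :: "'k \<Rightarrow> 'k" and p :: nat
  assumes "kummer_setup p F \<xi> \<alpha> \<sigma>"
    and "\<gamma> \<noteq> 0"
    and "2 \<le> len p \<sigma> \<gamma>" and "len p \<sigma> \<gamma> < p"
    and "idx p \<sigma> \<xi> \<gamma> = 0"
  shows "\<exists>\<gamma>'. \<gamma>' \<noteq> 0 \<and>
           len p \<sigma> \<gamma>' = len p \<sigma> \<gamma> + 1 \<and>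
           cls p (rho_pow \<sigma> 2 \<gamma>') = cls p (rho_pow \<sigma> 1 \<gamma>) \<and>
           Mfix p \<sigma> \<gamma> = Mfix p \<sigma> \<gamma>' \<and>
           (len p \<sigma> \<gamma> < p - 1 \<longrightarrow> inJ p \<sigma> (p - 1) \<gamma>' \<and> idx p \<sigma> \<xi> \<gamma>' = 0)"
proof -
  interpret kummer p F \<xi> \<alpha> \<sigma>
    by (rule kummer.intro) (fact assms(1))
  obtain \<delta> where \<delta>: "\<delta> ^ p = normK p \<sigma> \<gamma>" "\<sigma> \<delta> = \<delta>"
    and \<delta>_rho: "len p \<sigma> \<gamma> < p - 1 \<Longrightarrow>
      \<exists>c. c ^ p = rho_pow \<sigma> (p - 2) \<gamma> \<and> \<delta> = rho \<sigma> c * norm_cofactor \<gamma>"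
    using exists_fixed_root_of_normK_via_rho[OF assms(2,4,5)] by blast
  have "\<delta> \<noteq> 0"
    using root_of_normK_nonzero \<delta>(1) assms(2) by blast
  then have "normK p \<sigma> (\<gamma> / \<delta>) = 1"
    using normK_nonzero[OF assms(2)] by (simp add: normK_divide normK_fixed_point[OF \<delta>(2)] \<delta>(1))
  then obtain Y where Y: "Y \<noteq> 0" "rho \<sigma> Y = \<gamma> / \<delta>"
    by (rule hilbert90)
  note shift = rho_pow_Suc_Suc_eq_of_rho_eq_divide[OF Y(2) \<delta>(2) \<open>\<delta> \<noteq> 0\<close>]
  have len_Y: "len p \<sigma> Y = len p \<sigma> \<gamma> + 1"
    using len_eq_Suc_of_rho_pow_shift[OF assms(2,3) shift] .
  have "cls p (rho_pow \<sigma> 2 Y) = cls p (rho_pow \<sigma> 1 \<gamma>)"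
    using shift[of 0] by (simp add: numeral_2_eq_2)
  moreover have "inJ p \<sigma> (p - 1) Y \<and> idx p \<sigma> \<xi> Y = 0" if short: "len p \<sigma> \<gamma> < p - 1"
  proof
    show "inJ p \<sigma> (p - 1) Y"
      using short len_Y by (simp add: inJ_def pth_power_rho_pow_iff[OF Y(1)])
    obtain c where "c ^ p = rho_pow \<sigma> (p - 2) \<gamma>" "\<delta> = rho \<sigma> c * norm_cofactor \<gamma>"
      using \<delta>_rho[OF short] by blast
    then show "idx p \<sigma> \<xi> Y = 0"
      by (rule idx_eq_0_of_rho_eq_divide[OF Y \<delta>(2) \<open>\<delta> \<noteq> 0\<close>])
  qed
  ultimately show ?thesis
    using Y(1) len_Y Mfix_eq_of_rho_pow_shift[OF assms(2) Y(1) assms(3) shift] by blast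
qed

end
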